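(* Let $G$ be a $2$-generated, simple, complete, torsion-free group in which every proper subgroup is infinite cyclic. Then every maximal cyclic subgroup $Z$ of $G$ is malnormal (i.e. $Z\cap g^{-1}Zg=1$ for all $g\in G\setminus Z$), and $G$ has the unique root property.
   Context: A group is complete if it has trivial center and no outer automorphisms. A group has the unique root property if for all $x,y$ in it and every positive integer $n$, $x^n=y^n$ implies $x=y$. *)

theory Defs
  imports "HOL-Algebra.Algebra"
begin

definition group_center :: "('a, 'b) monoid_scheme \<Rightarrow> 'a set" where
  "group_center G = {z \<in> carrier G. \<forall>x \<in> carrier G. z \<otimes>\<^bsub>G\<^esub> x = x \<otimes>\<^bsub>G\<^esub> z}"

definition inner_aut :: "('a, 'b) monoid_scheme \<Rightarrow> 'a \<Rightarrow> 'a \<Rightarrow> 'a" where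
  "inner_aut G g = (\<lambda>x \<in> carrier G. g \<otimes>\<^bsub>G\<^esub> x \<otimes>\<^bsub>G\<^esub> inv\<^bsub>G\<^esub> g)"

definition complete_group :: "('a, 'b) monoid_scheme \<Rightarrow> bool" where
  "complete_group G \<longleftrightarrow> group_center G = {\<one>\<^bsub>G\<^esub>} \<and>
     (\<forall>\<phi> \<in> auto G. \<exists>g \<in> carrier G. \<phi> = inner_aut G g)"

text \<open>Simple: nontrivial, and the only normal subgroups are trivial and whole group
  (the library locale simple_group uses order G > 1, which fails for infinite groups).\<close>
definition simple_grp :: "('a, 'b) monoid_scheme \<Rightarrow> bool" where
  "simple_grp G \<longleftrightarrow> carrier G \<noteq> {\<one>\<^bsub>G\<^esub>} \<and>
     (\<forall>H. H \<lhd> G \<longrightarrow> H = carrier G \<or> H = {\<one>\<^bsub>G\<^esub>})"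

definition torsion_free :: "('a, 'b) monoid_scheme \<Rightarrow> bool" where
  "torsion_free G \<longleftrightarrow>
     (\<forall>x \<in> carrier G. \<forall>n::nat. n > 0 \<longrightarrow> x [^]\<^bsub>G\<^esub> n = \<one>\<^bsub>G\<^esub> \<longrightarrow> x = \<one>\<^bsub>G\<^esub>)"

definition two_generated :: "('a, 'b) monoid_scheme \<Rightarrow> bool" where
  "two_generated G \<longleftrightarrow> (\<exists>a \<in> carrier G. \<exists>b \<in> carrier G. generate G {a, b} = carrier G)"

definition cyclic_subgroup :: "('a, 'b) monoid_scheme \<Rightarrow> 'a set \<Rightarrow> bool" where
  "cyclic_subgroup G H \<longleftrightarrow> subgroup H G \<and> cyclic_group (subgroup_generated G H)"

definition maximal_cyclic_subgroup :: "('a, 'b) monoid_scheme \<Rightarrow> 'a set \<Rightarrow> bool" where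
  "maximal_cyclic_subgroup G Z \<longleftrightarrow> cyclic_subgroup G Z \<and>
     (\<forall>Z'. cyclic_subgroup G Z' \<and> Z \<subseteq> Z' \<longrightarrow> Z' = Z)"

definition malnormal :: "('a, 'b) monoid_scheme \<Rightarrow> 'a set \<Rightarrow> bool" where
  "malnormal G Z \<longleftrightarrow> (\<forall>g \<in> carrier G - Z.
     Z \<inter> {inv\<^bsub>G\<^esub> g \<otimes>\<^bsub>G\<^esub> z \<otimes>\<^bsub>G\<^esub> g | z. z \<in> Z} = {\<one>\<^bsub>G\<^esub>})"

definition unique_root_property :: "('a, 'b) monoid_scheme \<Rightarrow> bool" where
  "unique_root_property G \<longleftrightarrow> (\<forall>x \<in> carrier G. \<forall>y \<in> carrier G. \<forall>n::nat. n > 0 \<longrightarrow>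
     x [^]\<^bsub>G\<^esub> n = y [^]\<^bsub>G\<^esub> n \<longrightarrow> x = y)"

end

theory Submission
  imports Defs
begin

text \<open>As the centre is trivial, the centraliser of any \<open>x \<noteq> 1\<close> is a proper nontrivial subgroup,
  hence cyclic; in particular the centraliser of every nontrivial element of a maximal cyclic
  subgroup \<open>Z\<close> is \<open>Z\<close> itself. If \<open>g\<close> conjugates some \<open>1 \<noteq> x \<in> Z\<close> into \<open>Z\<close>, it therefore
  conjugates \<open>Z\<close> onto itself, so \<open>g\<close> normalises \<open>Z\<close>; by simplicity the normaliser of \<open>Z\<close> is
  proper, hence cyclic, hence equal to \<open>Z\<close>. Similarly \<open>x\<^sup>n = y\<^sup>n \<noteq> 1\<close> places \<open>x\<close> and \<open>y\<close> in
  the cyclic centraliser of \<open>x\<^sup>n\<close>, so they commute and \<open>x y\<^sup>-\<^sup>1\<close> is a torsion element.\<close>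

definition centralizer :: "('a, 'b) monoid_scheme \<Rightarrow> 'a \<Rightarrow> 'a set" where
  "centralizer G x = {y \<in> carrier G. y \<otimes>\<^bsub>G\<^esub> x = x \<otimes>\<^bsub>G\<^esub> y}"

lemma (in group) subgroup_centralizer:
  assumes "x \<in> carrier G"
  shows "subgroup (centralizer G x) G"
proof (rule subgroupI)
  show "centralizer G x \<subseteq> carrier G" "centralizer G x \<noteq> {}"
    using assms by (auto simp: centralizer_def intro!: exI[of _ \<one>])
next
  fix a assume "a \<in> centralizer G x"
  then have a: "a \<in> carrier G" "a \<otimes> x = x \<otimes> a" by (auto simp: centralizer_def)
  then have "inv a \<otimes> x = x \<otimes> inv a"
    using assms by (metis inv_closed inv_solve_left' inv_solve_right m_assoc m_closed)
  with a show "inv a \<in> centralizer G x" by (simp add: centralizer_def)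
  fix b assume "b \<in> centralizer G x"
  then have b: "b \<in> carrier G" "b \<otimes> x = x \<otimes> b" by (auto simp: centralizer_def)
  with a assms have "a \<otimes> b \<otimes> x = x \<otimes> (a \<otimes> b)" by (metis m_assoc)
  with a b show "a \<otimes> b \<in> centralizer G x" by (simp add: centralizer_def)
qed

lemma (in group) cyclic_subgroup_commute:
  assumes "cyclic_subgroup G H" "x \<in> H" "y \<in> H"
  shows "x \<otimes> y = y \<otimes> x"
proof -
  have H: "subgroup H G" "cyclic_group (subgroup_generated G H)"
    using assms(1) by (auto simp: cyclic_subgroup_def)
  then have "comm_group (subgroup_generated G H)"
    by (simp add: group.cyclic_imp_abelian_group group_subgroup_generated)
  moreover have "carrier (subgroup_generated G H) = H"
    using H(1) by (simp add: subgroup.carrier_subgroup_generated_subgroup)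
  ultimately show ?thesis
    using assms(2,3) by (metis comm_group.axioms(1) comm_monoid.m_comm mult_subgroup_generated)
qed

lemma (in group) conj_mult:
  assumes "g \<in> carrier G" "x \<in> carrier G" "y \<in> carrier G"
  shows "g \<otimes> (x \<otimes> y) \<otimes> inv g = (g \<otimes> x \<otimes> inv g) \<otimes> (g \<otimes> y \<otimes> inv g)"
  using assms by (simp add: m_assoc) (simp add: m_assoc[symmetric])

lemma (in group) centralizer_conj:
  assumes g: "g \<in> carrier G" and x: "x \<in> carrier G"
  shows "centralizer G (g \<otimes> x \<otimes> inv g) = (\<lambda>y. g \<otimes> y \<otimes> inv g) ` centralizer G x"
proof -
  have commute_conj: "(g \<otimes> y \<otimes> inv g) \<otimes> (g \<otimes> x \<otimes> inv g) = (g \<otimes> x \<otimes> inv g) \<otimes> (g \<otimes> y \<otimes> inv g)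
      \<longleftrightarrow> y \<otimes> x = x \<otimes> y" if "y \<in> carrier G" for y
    using that g x by (simp add: conj_mult[symmetric])
  show ?thesis
  proof (intro equalityI subsetI)
    fix y assume "y \<in> centralizer G (g \<otimes> x \<otimes> inv g)"
    then have y: "y \<in> carrier G" and "y \<otimes> (g \<otimes> x \<otimes> inv g) = (g \<otimes> x \<otimes> inv g) \<otimes> y"
      by (auto simp: centralizer_def)
    moreover have y_conj: "y = g \<otimes> (inv g \<otimes> y \<otimes> g) \<otimes> inv g"
      using g y by (simp add: conjugation_is_surj)
    ultimately have "inv g \<otimes> y \<otimes> g \<in> centralizer G x"
      using commute_conj[of "inv g \<otimes> y \<otimes> g"] g y by (auto simp: centralizer_def)
    with y_conj show "y \<in> (\<lambda>y. g \<otimes> y \<otimes> inv g) ` centralizer G x" by blast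
  qed (use g x commute_conj in \<open>auto simp: centralizer_def\<close>)
qed

lemma (in group) normalizer_iff_conj_image:
  assumes "H \<subseteq> carrier G"
  shows "g \<in> normalizer G H \<longleftrightarrow> g \<in> carrier G \<and> (\<lambda>h. g \<otimes> h \<otimes> inv g) ` H = H"
proof -
  have "g <# H #> inv g = (\<lambda>h. g \<otimes> h \<otimes> inv g) ` H" if "g \<in> carrier G"
    using assms that by (auto simp: l_coset_def r_coset_def)
  then show ?thesis
    using assms by (auto simp: normalizer_def stabilizer_def)
qed

lemma (in group) subgroup_subset_normalizer:
  "subgroup H G \<Longrightarrow> H \<subseteq> normalizer G H"
  using subgroup_in_normalizer normal_imp_subgroup subgroup.subset by fastforce

lemma (in group) normal_if_normalizer_eq_carrier:
  assumes "subgroup H G" "normalizer G H = carrier G"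
  shows "H \<lhd> G"
  using assms normalizer_iff_conj_image[OF subgroup.subset[OF assms(1)]]
  by (auto simp: normal_inv_iff)

lemma (in group) torsion_free_commuting_roots_eq:
  assumes "torsion_free G" "x \<in> carrier G" "y \<in> carrier G" "x \<otimes> y = y \<otimes> x"
    and "(n::nat) > 0" "x [^] n = y [^] n"
  shows "x = y"
proof -
  have "x \<otimes> inv y = inv y \<otimes> x"
    using assms(2-4) by (metis inv_closed inv_solve_left' inv_solve_right m_assoc m_closed)
  then have "(x \<otimes> inv y) [^] n = x [^] n \<otimes> inv y [^] n"
    using assms(2,3) by (intro pow_mult_distrib) auto
  also have "\<dots> = x [^] n \<otimes> inv (y [^] n)"
    using assms(3) by (simp add: nat_pow_inv)
  also have "\<dots> = \<one>"
    using assms(2,3,6) by simp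
  finally have "x \<otimes> inv y = \<one>"
    using assms(1-3,5) unfolding torsion_free_def by blast
  then show ?thesis
    using assms(2,3) by (metis inv_closed inv_equality inv_inv)
qed

locale centerless_proper_cyclic = group +
  assumes center_trivial: "group_center G = {\<one>}"
    and proper_subgroup_cyclic:
      "\<And>H. \<lbrakk>subgroup H G; H \<noteq> carrier G; H \<noteq> {\<one>}\<rbrakk> \<Longrightarrow> cyclic_subgroup G H"
begin

lemma carrier_not_cyclic:
  assumes "carrier G \<noteq> {\<one>}"
  shows "\<not> cyclic_subgroup G (carrier G)"
proof
  assume "cyclic_subgroup G (carrier G)"
  then have "group_center G = carrier G"
    unfolding group_center_def using cyclic_subgroup_commute by blast
  with assms center_trivial show False by simp
qed

lemma cyclic_centralizer:
  assumes "x \<in> carrier G" "x \<noteq> \<one>"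
  shows "cyclic_subgroup G (centralizer G x)"
proof (rule proper_subgroup_cyclic)
  show "subgroup (centralizer G x) G"
    using assms(1) by (rule subgroup_centralizer)
  show "centralizer G x \<noteq> {\<one>}"
    using assms by (auto simp: centralizer_def)
  show "centralizer G x \<noteq> carrier G"
  proof
    assume "centralizer G x = carrier G"
    then have "y \<otimes> x = x \<otimes> y" if "y \<in> carrier G" for y
      using that unfolding centralizer_def by blast
    then have "x \<in> group_center G"
      using assms(1) by (simp add: group_center_def)
    with assms center_trivial show False by simp
  qed
qed

lemma centralizer_maximal_cyclic:
  assumes Z: "maximal_cyclic_subgroup G Z" and z: "z \<in> Z" "z \<noteq> \<one>"
  shows "centralizer G z = Z"
proof -
  have cyclic: "cyclic_subgroup G Z"
    using Z by (simp add: maximal_cyclic_subgroup_def)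
  then have sub: "subgroup Z G"
    by (simp add: cyclic_subgroup_def)
  have "Z \<subseteq> centralizer G z"
    using z(1) cyclic_subgroup_commute[OF cyclic] subgroup.mem_carrier[OF sub]
    unfolding centralizer_def by blast
  with Z cyclic_centralizer[OF subgroup.mem_carrier[OF sub z(1)] z(2)] show ?thesis
    unfolding maximal_cyclic_subgroup_def by blast
qed

lemma normalizer_maximal_cyclic:
  assumes "simple_grp G" and Z: "maximal_cyclic_subgroup G Z" "Z \<noteq> {\<one>}"
  shows "normalizer G Z = Z"
proof -
  have cyclic: "cyclic_subgroup G Z" and maximal: "\<And>Z'. cyclic_subgroup G Z' \<Longrightarrow> Z \<subseteq> Z' \<Longrightarrow> Z' = Z"
    using Z(1) by (auto simp: maximal_cyclic_subgroup_def)
  then have sub: "subgroup Z G" by (simp add: cyclic_subgroup_def)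
  have "normalizer G Z \<noteq> carrier G"
  proof
    assume "normalizer G Z = carrier G"
    then have "Z \<lhd> G" by (rule normal_if_normalizer_eq_carrier[OF sub])
    then have "Z = carrier G"
      using assms(1) Z(2) unfolding simple_grp_def by blast
    with cyclic carrier_not_cyclic Z(2) show False by auto
  qed
  moreover have "Z \<subseteq> normalizer G Z"
    using sub by (rule subgroup_subset_normalizer)
  ultimately have "cyclic_subgroup G (normalizer G Z)"
    using Z(2) subgroup.one_closed[OF sub]
    by (intro proper_subgroup_cyclic normalizer_imp_subgroup subgroup.subset[OF sub]) auto
  with maximal \<open>Z \<subseteq> normalizer G Z\<close> show ?thesis by blast
qed

lemma malnormal_maximal_cyclic:
  assumes "simple_grp G" and Z: "maximal_cyclic_subgroup G Z"
  shows "malnormal G Z"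
  unfolding malnormal_def
proof (intro ballI)
  fix g assume g: "g \<in> carrier G - Z"
  have sub: "subgroup Z G"
    using Z by (simp add: maximal_cyclic_subgroup_def cyclic_subgroup_def)
  have "inv g \<otimes> \<one> \<otimes> g = \<one>"
    using g by simp
  then have "\<one> \<in> Z \<inter> {inv g \<otimes> z \<otimes> g |z. z \<in> Z}"
    using subgroup.one_closed[OF sub] by force
  moreover have False if "x \<in> Z" "z \<in> Z" "x = inv g \<otimes> z \<otimes> g" "x \<noteq> \<one>" for x z
  proof -
    have x: "x \<in> carrier G" and "z \<in> carrier G"
      using that(1,2) subgroup.mem_carrier[OF sub] by auto
    with g that(3,4) have z: "z = g \<otimes> x \<otimes> inv g" "z \<noteq> \<one>"
      by (auto simp: conjugation_is_surj)
    have "Z = (\<lambda>y. g \<otimes> y \<otimes> inv g) ` Z"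
      using centralizer_conj[of g x] g x z
        centralizer_maximal_cyclic[OF Z that(1,4)] centralizer_maximal_cyclic[OF Z that(2) z(2)]
      by simp
    then have "g \<in> normalizer G Z"
      using g sub by (simp add: normalizer_iff_conj_image subgroup.subset)
    moreover have "Z \<noteq> {\<one>}"
      using that(1,4) by auto
    ultimately show False
      using normalizer_maximal_cyclic[OF assms] g by simp
  qed
  ultimately show "Z \<inter> {inv g \<otimes> z \<otimes> g |z. z \<in> Z} = {\<one>}"
    by blast
qed

lemma unique_root_property_if_torsion_free:
  assumes "torsion_free G"
  shows "unique_root_property G"
  unfolding unique_root_property_def
proof (intro ballI allI impI)
  fix x y and n :: nat
  assume xy: "x \<in> carrier G" "y \<in> carrier G" and n: "n > 0" and eq: "x [^] n = y [^] n"
  show "x = y"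
  proof (cases "x [^] n = \<one>")
    case True
    then show ?thesis
      using assms xy n eq unfolding torsion_free_def by metis
  next
    case False
    have "x [^] n \<otimes> x = x \<otimes> x [^] n" "y [^] n \<otimes> y = y \<otimes> y [^] n"
      using xy by (simp_all add: group_commutes_pow)
    then have "x \<in> centralizer G (x [^] n)" "y \<in> centralizer G (x [^] n)"
      using xy eq by (auto simp: centralizer_def)
    then have "x \<otimes> y = y \<otimes> x"
      using cyclic_centralizer[of "x [^] n"] xy(1) False cyclic_subgroup_commute by simp
    then show ?thesis by (rule torsion_free_commuting_roots_eq[OF assms xy _ n eq])
  qed
qed

end

theorem lemma5p3:
  fixes G (structure)
  assumes "group G"
    and "two_generated G"
    and "simple_grp G"
    and "complete_group G"
    and "torsion_free G"
    and "\<And>H. \<lbrakk>subgroup H G; H \<noteq> carrier G; H \<noteq> {\<one>}\<rbrakk> \<Longrightarrow>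
            cyclic_subgroup G H \<and> infinite H"
  shows "(\<forall>Z. maximal_cyclic_subgroup G Z \<longrightarrow> malnormal G Z) \<and> unique_root_property G"
proof -
  have "centerless_proper_cyclic G"
    using assms(1,4,6)
    by (simp add: centerless_proper_cyclic_def centerless_proper_cyclic_axioms_def complete_group_def)
  then interpret centerless_proper_cyclic G .
  show ?thesis
    using malnormal_maximal_cyclic[OF assms(3)] unique_root_property_if_torsion_free[OF assms(5)]
    by blast
qed

end
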